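(* If $A$ is a polyomino with $n$ tiles and $h$ holes, then $p_o(A)\ge 2\lceil 2\sqrt{n+h}\,\rceil$.
   Context: A polyomino is a finite union of closed unit squares (tiles) of the square lattice, any two meeting (if at all) in a whole edge, whose interior is connected. Its holes are the bounded connected components of its complement in the plane. The outer perimeter of $A$ is the set of unit edges on the topological boundary of $A$ that do not bound a hole; $p_o(A)$ is its number of edges. *)

theory Defs
  imports "HOL-Analysis.Analysis"
begin

text \<open>Lattice cells are indexed by their lower-left corner (i,j) in int x int.
  The tile of cell (i,j) is the closed unit square [i,i+1] x [j,j+1] in the plane.\<close>

definition tile :: "int \<times> int \<Rightarrow> (real \<times> real) set" where
  "tile c = {(x, y). of_int (fst c) \<le> x \<and> x \<le> of_int (fst c) + 1 \<and>
                     of_int (snd c) \<le> y \<and> y \<le> of_int (snd c) + 1}"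

definition region :: "(int \<times> int) set \<Rightarrow> (real \<times> real) set" where
  "region T = (\<Union>c\<in>T. tile c)"

definition polyomino :: "(int \<times> int) set \<Rightarrow> bool" where
  "polyomino T \<longleftrightarrow> finite T \<and> T \<noteq> {} \<and> connected (interior (region T))"

definition holes :: "(int \<times> int) set \<Rightarrow> (real \<times> real) set set" where
  "holes T = {C \<in> components (- region T). bounded C}"

definition hedge :: "int \<times> int \<Rightarrow> (real \<times> real) set" where
  "hedge c = {(x, y). of_int (fst c) \<le> x \<and> x \<le> of_int (fst c) + 1 \<and> y = of_int (snd c)}"

definition vedge :: "int \<times> int \<Rightarrow> (real \<times> real) set" where
  "vedge c = {(x, y). x = of_int (fst c) \<and> of_int (snd c) \<le> y \<and> y \<le> of_int (snd c) + 1}"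

definition unit_edges :: "(real \<times> real) set set" where
  "unit_edges = range hedge \<union> range vedge"

definition outer_perimeter :: "(int \<times> int) set \<Rightarrow> (real \<times> real) set set" where
  "outer_perimeter T = {e \<in> unit_edges. e \<subseteq> frontier (region T) \<and>
                         \<not> (\<exists>H\<in>holes T. e \<subseteq> frontier H)}"

definition p_o :: "(int \<times> int) set \<Rightarrow> nat" where
  "p_o T = card (outer_perimeter T)"

end

theory Submission
  imports Defs
begin

text \<open>Let \<open>a\<close> and \<open>b\<close> be the numbers of columns and rows of the lattice that meet \<open>A\<close>.
  In every occupied column the bottom edge of the lowest tile and the top edge of the highest
  tile face an unbounded tile-free half-strip, which lies in the unbounded component of the
  complement; so these edges are outer, and likewise for rows: \<open>p\<^sub>o(A) \<ge> 2(a + b)\<close>.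
  A hole is bounded, so it cannot meet a tile-free full column or row strip; hence it contains
  an empty open cell of the \<open>a \<times> b\<close> bounding grid, distinct holes giving distinct cells, and
  \<open>n + h \<le> ab \<le> ((a + b)/2)\<^sup>2\<close>.\<close>

lemma int_eq_if_in_unit_intervals:
  fixes x :: real
  assumes "of_int i < x" "x < of_int i + 1" "of_int a \<le> x" "x \<le> of_int a + 1"
  shows "a = i"
proof -
  have "of_int a < (of_int (i + 1) :: real)" "of_int i < (of_int (a + 1) :: real)"
    using assms by simp_all
  then have "a < i + 1" "i < a + 1"
    by (simp_all only: of_int_less_iff)
  then show ?thesis by simp
qed

lemma mem_region_column:
  fixes x y :: real
  assumes "of_int i < x" "x < of_int i + 1"
  shows "(x, y) \<in> region T \<longleftrightarrow> (\<exists>j. (i, j) \<in> T \<and> of_int j \<le> y \<and> y \<le> of_int j + 1)"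
proof
  assume "(x, y) \<in> region T"
  then obtain a j where "(a, j) \<in> T" "(x, y) \<in> tile (a, j)"
    by (auto simp: region_def)
  moreover from this have "a = i"
    using assms by (intro int_eq_if_in_unit_intervals[of i x]) (auto simp: tile_def)
  ultimately show "\<exists>j. (i, j) \<in> T \<and> of_int j \<le> y \<and> y \<le> of_int j + 1"
    by (auto simp: tile_def)
qed (use assms in \<open>force simp: region_def tile_def\<close>)

lemma mem_region_row:
  fixes x y :: real
  assumes "of_int j < y" "y < of_int j + 1"
  shows "(x, y) \<in> region T \<longleftrightarrow> (\<exists>i. (i, j) \<in> T \<and> of_int i \<le> x \<and> x \<le> of_int i + 1)"
proof
  assume "(x, y) \<in> region T"
  then obtain i b where "(i, b) \<in> T" "(x, y) \<in> tile (i, b)"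
    by (auto simp: region_def)
  moreover from this have "b = j"
    using assms by (intro int_eq_if_in_unit_intervals[of j y]) (auto simp: tile_def)
  ultimately show "\<exists>i. (i, j) \<in> T \<and> of_int i \<le> x \<and> x \<le> of_int i + 1"
    by (auto simp: tile_def)
qed (use assms in \<open>force simp: region_def tile_def\<close>)

lemma closed_region:
  assumes "finite T"
  shows "closed (region T)"
proof -
  have "tile c = {of_int (fst c)..of_int (fst c) + 1} \<times> {of_int (snd c)..of_int (snd c) + 1}" for c
    by (auto simp: tile_def)
  then show ?thesis
    using assms unfolding region_def by (auto intro!: closed_Times)
qed

definition open_cell :: "int \<times> int \<Rightarrow> (real \<times> real) set" where
  "open_cell c = {of_int (fst c)<..<of_int (fst c) + 1} \<times> {of_int (snd c)<..<of_int (snd c) + 1}"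

lemma closure_open_cell: "closure (open_cell c) = tile c"
  by (auto simp: open_cell_def tile_def closure_Times)

lemma open_cell_Int_region:
  assumes "c \<notin> T"
  shows "open_cell c \<inter> region T = {}"
proof -
  have "(x, y) \<notin> region T" if xy: "(x, y) \<in> open_cell (i, j)" and ij: "(i, j) \<notin> T" for x y i j
  proof
    assume "(x, y) \<in> region T"
    then obtain j' where "(i, j') \<in> T" "of_int j' \<le> y" "y \<le> of_int j' + 1"
      using xy mem_region_column[of i x y T] by (auto simp: open_cell_def)
    moreover from this have "j' = j"
      using xy by (intro int_eq_if_in_unit_intervals[of j y]) (auto simp: open_cell_def)
    ultimately show False
      using ij by simp
  qed
  then show ?thesis using assms by (cases c) auto
qed

lemma not_bounded_lessThan: "\<not> bounded {..<a :: real}"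
proof
  assume "bounded {..<a}"
  then obtain m where "\<And>x. x < a \<Longrightarrow> m \<le> x"
    by (metis bounded_imp_bdd_below bdd_below_def lessThan_iff)
  from this[of "min m a - 1"] show False by linarith
qed

lemma not_bounded_greaterThan: "\<not> bounded {a :: real<..}"
proof
  assume "bounded {a<..}"
  then obtain m where "\<And>x. a < x \<Longrightarrow> x \<le> m"
    by (metis bounded_imp_bdd_above bdd_above_def greaterThan_iff)
  from this[of "max m a + 1"] show False by linarith
qed

lemma bounded_Times_imp_bounded_fst: "bounded (A \<times> B) \<Longrightarrow> B \<noteq> {} \<Longrightarrow> bounded A"
  using bounded_fst[of "A \<times> B"] by simp

lemma bounded_Times_imp_bounded_snd: "bounded (A \<times> B) \<Longrightarrow> A \<noteq> {} \<Longrightarrow> bounded B"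
  using bounded_snd[of "A \<times> B"] by simp

lemma hole_disjoint_unbounded_connected:
  assumes "connected D" "\<not> bounded D" "D \<inter> region T = {}" "H \<in> holes T"
  shows "D \<inter> H = {}"
proof (rule ccontr)
  assume "D \<inter> H \<noteq> {}"
  moreover have "H \<in> components (- region T)" "bounded H"
    using assms(4) by (auto simp: holes_def)
  ultimately have "D \<subseteq> H"
    using components_maximal[of H "- region T" D] assms(1,3) by blast
  with \<open>bounded H\<close> assms(2) show False
    using bounded_subset by blast
qed

lemma edge_in_outer_perimeter:
  assumes "e \<in> unit_edges" "e \<subseteq> region T" "q \<in> e"
    and "connected D" "\<not> bounded D" "D \<inter> region T = {}"
    and "e \<subseteq> closure D" "q \<in> interior (region T \<union> D)"
  shows "e \<in> outer_perimeter T"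
proof -
  have "interior (region T) \<inter> closure D = {}"
    using assms(6) interior_subset by (subst open_Int_closure_eq_empty) auto
  then have "e \<subseteq> frontier (region T)"
    using assms(2,7) closure_subset[of "region T"] by (auto simp: frontier_def)
  moreover have "\<not> e \<subseteq> frontier H" if "H \<in> holes T" for H
  proof
    assume "e \<subseteq> frontier H"
    then have "q \<in> closure H"
      using assms(3) by (auto simp: frontier_def)
    have "H \<subseteq> - region T"
      using that in_components_subset by (auto simp: holes_def)
    moreover have "D \<inter> H = {}"
      using hole_disjoint_unbounded_connected assms(4-6) that by blast
    ultimately have "interior (region T \<union> D) \<inter> H = {}"
      using interior_subset by blast
    then have "interior (region T \<union> D) \<inter> closure H = {}"
      by (subst open_Int_closure_eq_empty) auto
    with assms(8) \<open>q \<in> closure H\<close> show False by blast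
  qed
  ultimately show ?thesis
    using assms(1) by (auto simp: outer_perimeter_def)
qed

lemma bottom_edge_in_outer_perimeter:
  assumes "(i, j) \<in> T" "\<And>j'. (i, j') \<in> T \<Longrightarrow> j \<le> j'"
  shows "hedge (i, j) \<in> outer_perimeter T"
proof (rule edge_in_outer_perimeter)
  let ?I = "{of_int i<..<of_int i + 1 :: real}"
  let ?D = "?I \<times> {..<of_int j :: real}"
  show "hedge (i, j) \<in> unit_edges"
    by (simp add: unit_edges_def)
  show "hedge (i, j) \<subseteq> region T"
    using assms(1) by (force simp: hedge_def region_def tile_def)
  show "(of_int i + 1/2, of_int j) \<in> hedge (i, j)"
    by (simp add: hedge_def)
  show "connected ?D"
    by (intro connected_Times) simp_all
  show "\<not> bounded ?D"
    using not_bounded_lessThan bounded_Times_imp_bounded_snd by fastforce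
  show "?D \<inter> region T = {}"
    using assms(2) by (fastforce simp: mem_region_column)
  show "hedge (i, j) \<subseteq> closure ?D"
    by (auto simp: closure_Times hedge_def)
  have "?I \<times> {..<of_int j + 1} \<subseteq> region T \<union> ?D"
    using assms(1) by (force simp: mem_region_column)
  then show "(of_int i + 1/2, of_int j) \<in> interior (region T \<union> ?D)"
    by (intro interiorI[of "?I \<times> {..<of_int j + 1}"]) (auto intro: open_Times)
qed

lemma top_edge_in_outer_perimeter:
  assumes "(i, j) \<in> T" "\<And>j'. (i, j') \<in> T \<Longrightarrow> j' \<le> j"
  shows "hedge (i, j + 1) \<in> outer_perimeter T"
proof (rule edge_in_outer_perimeter)
  let ?I = "{of_int i<..<of_int i + 1 :: real}"
  let ?D = "?I \<times> {of_int j + 1 :: real<..}"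
  show "hedge (i, j + 1) \<in> unit_edges"
    by (simp add: unit_edges_def)
  show "hedge (i, j + 1) \<subseteq> region T"
    using assms(1) by (force simp: hedge_def region_def tile_def)
  show "(of_int i + 1/2, of_int j + 1) \<in> hedge (i, j + 1)"
    by (simp add: hedge_def)
  show "connected ?D"
    by (intro connected_Times) simp_all
  show "\<not> bounded ?D"
    using not_bounded_greaterThan bounded_Times_imp_bounded_snd by fastforce
  show "?D \<inter> region T = {}"
    using assms(2) by (fastforce simp: mem_region_column)
  show "hedge (i, j + 1) \<subseteq> closure ?D"
    by (auto simp: closure_Times hedge_def)
  have "?I \<times> {of_int j<..} \<subseteq> region T \<union> ?D"
    using assms(1) by (force simp: mem_region_column)
  then show "(of_int i + 1/2, of_int j + 1) \<in> interior (region T \<union> ?D)"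
    by (intro interiorI[of "?I \<times> {of_int j<..}"]) (auto intro: open_Times)
qed

lemma left_edge_in_outer_perimeter:
  assumes "(i, j) \<in> T" "\<And>i'. (i', j) \<in> T \<Longrightarrow> i \<le> i'"
  shows "vedge (i, j) \<in> outer_perimeter T"
proof (rule edge_in_outer_perimeter)
  let ?J = "{of_int j<..<of_int j + 1 :: real}"
  let ?D = "{..<of_int i :: real} \<times> ?J"
  show "vedge (i, j) \<in> unit_edges"
    by (simp add: unit_edges_def)
  show "vedge (i, j) \<subseteq> region T"
    using assms(1) by (force simp: vedge_def region_def tile_def)
  show "(of_int i, of_int j + 1/2) \<in> vedge (i, j)"
    by (simp add: vedge_def)
  show "connected ?D"
    by (intro connected_Times) simp_all
  show "\<not> bounded ?D"
    using not_bounded_lessThan bounded_Times_imp_bounded_fst by fastforce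
  show "?D \<inter> region T = {}"
    using assms(2) by (fastforce simp: mem_region_row)
  show "vedge (i, j) \<subseteq> closure ?D"
    by (auto simp: closure_Times vedge_def)
  have "{..<of_int i + 1} \<times> ?J \<subseteq> region T \<union> ?D"
    using assms(1) by (force simp: mem_region_row)
  then show "(of_int i, of_int j + 1/2) \<in> interior (region T \<union> ?D)"
    by (intro interiorI[of "{..<of_int i + 1} \<times> ?J"]) (auto intro: open_Times)
qed

lemma right_edge_in_outer_perimeter:
  assumes "(i, j) \<in> T" "\<And>i'. (i', j) \<in> T \<Longrightarrow> i' \<le> i"
  shows "vedge (i + 1, j) \<in> outer_perimeter T"
proof (rule edge_in_outer_perimeter)
  let ?J = "{of_int j<..<of_int j + 1 :: real}"
  let ?D = "{of_int i + 1 :: real<..} \<times> ?J"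
  show "vedge (i + 1, j) \<in> unit_edges"
    by (simp add: unit_edges_def)
  show "vedge (i + 1, j) \<subseteq> region T"
    using assms(1) by (force simp: vedge_def region_def tile_def)
  show "(of_int i + 1, of_int j + 1/2) \<in> vedge (i + 1, j)"
    by (simp add: vedge_def)
  show "connected ?D"
    by (intro connected_Times) simp_all
  show "\<not> bounded ?D"
    using not_bounded_greaterThan bounded_Times_imp_bounded_fst by fastforce
  show "?D \<inter> region T = {}"
    using assms(2) by (fastforce simp: mem_region_row)
  show "vedge (i + 1, j) \<subseteq> closure ?D"
    by (auto simp: closure_Times vedge_def)
  have "{of_int i<..} \<times> ?J \<subseteq> region T \<union> ?D"
    using assms(1) by (force simp: mem_region_row)
  then show "(of_int i + 1, of_int j + 1/2) \<in> interior (region T \<union> ?D)"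
    by (intro interiorI[of "{of_int i<..} \<times> ?J"]) (auto intro: open_Times)
qed

lemma inj_hedge: "inj hedge"
proof (rule injI)
  fix c d assume eq: "hedge c = hedge d"
  have "(of_int (fst c), of_int (snd c)) \<in> hedge d"
    unfolding eq[symmetric] by (simp add: hedge_def)
  moreover have "(of_int (fst d), of_int (snd d)) \<in> hedge c"
    unfolding eq by (simp add: hedge_def)
  ultimately show "c = d"
    by (cases c, cases d) (simp add: hedge_def)
qed

lemma inj_vedge: "inj vedge"
proof (rule injI)
  fix c d assume eq: "vedge c = vedge d"
  have "(of_int (fst c), of_int (snd c)) \<in> vedge d"
    unfolding eq[symmetric] by (simp add: vedge_def)
  moreover have "(of_int (fst d), of_int (snd d)) \<in> vedge c"
    unfolding eq by (simp add: vedge_def)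
  ultimately show "c = d"
    by (cases c, cases d) (simp add: vedge_def)
qed

lemma hedge_neq_vedge: "hedge c \<noteq> vedge d"
proof
  assume "hedge c = vedge d"
  then have "(of_int (fst c) + 1/2, of_int (snd c)) \<in> vedge d"
    by (auto simp: hedge_def)
  then have "of_int (fst c) + 1/2 = (of_int (fst d) :: real)"
    by (simp add: vedge_def)
  moreover from this have "fst d = fst c"
    by (intro int_eq_if_in_unit_intervals[of "fst c" "of_int (fst c) + 1/2"]) auto
  ultimately show False by simp
qed

lemma lattice_point_in_region:
  assumes "(of_int a, of_int b) \<in> region T"
  shows "(a, b) \<in> (\<lambda>((i, j), s, t). (i + s, j + t)) ` (T \<times> {0, 1} \<times> {0, 1})"
proof -
  obtain i j where "(i, j) \<in> T" "(of_int a, of_int b) \<in> tile (i, j)"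
    using assms by (auto simp: region_def)
  moreover from this have "a - i \<in> {0, 1}" "b - j \<in> {0, 1}"
    by (auto simp: tile_def)
  ultimately show ?thesis
    by (force intro: image_eqI[of _ _ "((i, j), a - i, b - j)"])
qed

lemma finite_outer_perimeter:
  assumes "finite T"
  shows "finite (outer_perimeter T)"
proof -
  define K where "K = (\<lambda>((i, j), s, t). (i + s, j + t)) ` (T \<times> {0, 1 :: int} \<times> {0, 1 :: int})"
  have "outer_perimeter T \<subseteq> hedge ` K \<union> vedge ` K"
  proof
    fix e assume "e \<in> outer_perimeter T"
    then have "e \<in> unit_edges" "e \<subseteq> region T"
      using frontier_subset_closed[OF closed_region[OF assms]] by (auto simp: outer_perimeter_def)
    then obtain c where c: "e = hedge c \<or> e = vedge c"
      by (auto simp: unit_edges_def)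
    then have "(of_int (fst c), of_int (snd c)) \<in> region T"
      using \<open>e \<subseteq> region T\<close> by (auto simp: hedge_def vedge_def)
    then have "c \<in> K"
      using lattice_point_in_region[of "fst c" "snd c" T] by (simp add: K_def)
    with c show "e \<in> hedge ` K \<union> vedge ` K"
      by blast
  qed
  moreover have "finite K"
    using assms by (simp add: K_def)
  ultimately show ?thesis
    by (auto intro: finite_subset)
qed

lemma card_columns_le_outer_hedges:
  assumes "finite T"
  shows "2 * card (fst ` T) \<le> card (outer_perimeter T \<inter> range hedge)"
proof -
  define lo where "lo i = Min {j. (i, j) \<in> T}" for i
  define hi where "hi i = Max {j. (i, j) \<in> T}" for i
  have fin: "finite {j. (i, j) \<in> T}" for i
    by (rule finite_subset[of _ "snd ` T"]) (force, simp add: assms)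
  have ne: "{j. (i, j) \<in> T} \<noteq> {}" if "i \<in> fst ` T" for i
    using that by force
  have lo: "(i, lo i) \<in> T" "\<And>j. (i, j) \<in> T \<Longrightarrow> lo i \<le> j" if "i \<in> fst ` T" for i
    using Min_in[OF fin ne[OF that]] Min_le[OF fin] by (auto simp: lo_def)
  have hi: "(i, hi i) \<in> T" "\<And>j. (i, j) \<in> T \<Longrightarrow> j \<le> hi i" if "i \<in> fst ` T" for i
    using Max_in[OF fin ne[OF that]] Max_ge[OF fin] by (auto simp: hi_def)
  define edge where "edge = (\<lambda>(i, upper). hedge (if upper then (i, hi i + 1) else (i, lo i)))"
  have "edge (i, upper) \<in> outer_perimeter T" if "i \<in> fst ` T" for i upper
    using bottom_edge_in_outer_perimeter[OF lo[OF that]] top_edge_in_outer_perimeter[OF hi[OF that]]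
    by (simp add: edge_def)
  then have "edge ` (fst ` T \<times> UNIV) \<subseteq> outer_perimeter T \<inter> range hedge"
    by (auto simp: edge_def)
  moreover have "inj_on edge (fst ` T \<times> UNIV)"
  proof (rule inj_onI)
    fix c c' assume c: "c \<in> fst ` T \<times> UNIV" and eq: "edge c = edge c'"
    obtain i u i' u' where [simp]: "c = (i, u)" "c' = (i', u')"
      by fastforce
    have i: "i \<in> fst ` T"
      using c by simp
    have "(if u then (i, hi i + 1) else (i, lo i)) = (if u' then (i', hi i' + 1) else (i', lo i'))"
      using eq injD[OF inj_hedge] by (simp add: edge_def)
    moreover have "lo i < hi i + 1"
      using lo(2)[OF i hi(1)[OF i]] by simp
    ultimately show "c = c'"
      by (auto split: if_splits)
  qed
  ultimately have "card (fst ` T \<times> (UNIV :: bool set)) \<le> card (outer_perimeter T \<inter> range hedge)"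
    using finite_outer_perimeter[OF assms] by (intro card_inj_on_le) auto
  then show ?thesis
    by (simp add: card_cartesian_product)
qed

lemma card_rows_le_outer_vedges:
  assumes "finite T"
  shows "2 * card (snd ` T) \<le> card (outer_perimeter T \<inter> range vedge)"
proof -
  define lo where "lo j = Min {i. (i, j) \<in> T}" for j
  define hi where "hi j = Max {i. (i, j) \<in> T}" for j
  have fin: "finite {i. (i, j) \<in> T}" for j
    by (rule finite_subset[of _ "fst ` T"]) (force, simp add: assms)
  have ne: "{i. (i, j) \<in> T} \<noteq> {}" if "j \<in> snd ` T" for j
    using that by force
  have lo: "(lo j, j) \<in> T" "\<And>i. (i, j) \<in> T \<Longrightarrow> lo j \<le> i" if "j \<in> snd ` T" for j
    using Min_in[OF fin ne[OF that]] Min_le[OF fin] by (auto simp: lo_def)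
  have hi: "(hi j, j) \<in> T" "\<And>i. (i, j) \<in> T \<Longrightarrow> i \<le> hi j" if "j \<in> snd ` T" for j
    using Max_in[OF fin ne[OF that]] Max_ge[OF fin] by (auto simp: hi_def)
  define edge where "edge = (\<lambda>(j, right). vedge (if right then (hi j + 1, j) else (lo j, j)))"
  have "edge (j, right) \<in> outer_perimeter T" if "j \<in> snd ` T" for j right
    using left_edge_in_outer_perimeter[OF lo[OF that]] right_edge_in_outer_perimeter[OF hi[OF that]]
    by (simp add: edge_def)
  then have "edge ` (snd ` T \<times> UNIV) \<subseteq> outer_perimeter T \<inter> range vedge"
    by (auto simp: edge_def)
  moreover have "inj_on edge (snd ` T \<times> UNIV)"
  proof (rule inj_onI)
    fix c c' assume c: "c \<in> snd ` T \<times> UNIV" and eq: "edge c = edge c'"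
    obtain j u j' u' where [simp]: "c = (j, u)" "c' = (j', u')"
      by fastforce
    have j: "j \<in> snd ` T"
      using c by simp
    have "(if u then (hi j + 1, j) else (lo j, j)) = (if u' then (hi j' + 1, j') else (lo j', j'))"
      using eq injD[OF inj_vedge] by (simp add: edge_def)
    moreover have "lo j < hi j + 1"
      using lo(2)[OF j hi(1)[OF j]] by simp
    ultimately show "c = c'"
      by (auto split: if_splits)
  qed
  ultimately have "card (snd ` T \<times> (UNIV :: bool set)) \<le> card (outer_perimeter T \<inter> range vedge)"
    using finite_outer_perimeter[OF assms] by (intro card_inj_on_le) auto
  then show ?thesis
    by (simp add: card_cartesian_product)
qed

lemma columns_rows_le_p_o:
  assumes "finite T"
  shows "2 * card (fst ` T) + 2 * card (snd ` T) \<le> p_o T"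
proof -
  let ?P = "outer_perimeter T"
  have "card (?P \<inter> range hedge) + card (?P \<inter> range vedge)
      = card (?P \<inter> range hedge \<union> ?P \<inter> range vedge)"
    using finite_outer_perimeter[OF assms] hedge_neq_vedge
    by (intro card_Un_disjoint[symmetric]) auto
  also have "\<dots> \<le> card ?P"
    using finite_outer_perimeter[OF assms] by (intro card_mono) auto
  finally show ?thesis
    using card_columns_le_outer_hedges[OF assms] card_rows_le_outer_vedges[OF assms]
    by (simp add: p_o_def)
qed

lemma hole_contains_open_cell:
  assumes "finite T" "H \<in> holes T"
  obtains c where "c \<notin> T" "open_cell c \<subseteq> H"
proof -
  have H: "H \<in> components (- region T)"
    using assms(2) by (simp add: holes_def)
  then have "open H" "H \<subseteq> - region T"
    using open_components[of "- region T" H] closed_region[OF assms(1)] in_components_subset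
    by (auto simp: open_Compl)
  obtain x y where "(x, y) \<in> H"
    using in_components_nonempty[OF H] by auto
  define c where "c = (\<lfloor>x\<rfloor>, \<lfloor>y\<rfloor>)"
  have "(x, y) \<in> tile c"
    by (simp add: c_def tile_def)
  then have "c \<notin> T"
    using \<open>(x, y) \<in> H\<close> \<open>H \<subseteq> - region T\<close> by (auto simp: region_def)
  have "H \<inter> open_cell c \<noteq> {}"
    using open_Int_closure_eq_empty[OF \<open>open H\<close>, of "open_cell c"] \<open>(x, y) \<in> H\<close> \<open>(x, y) \<in> tile c\<close>
    by (auto simp: closure_open_cell)
  moreover have "connected (open_cell c)"
    by (simp add: open_cell_def connected_Times)
  ultimately have "open_cell c \<subseteq> H"
    using components_maximal[OF H] open_cell_Int_region[OF \<open>c \<notin> T\<close>] by blast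
  with \<open>c \<notin> T\<close> show thesis
    by (rule that)
qed

lemma open_cell_in_hole_imp_mem_bounding_box:
  assumes "H \<in> holes T" "open_cell c \<subseteq> H"
  shows "c \<in> fst ` T \<times> snd ` T"
proof -
  let ?I = "{of_int (fst c)<..<of_int (fst c) + 1 :: real}"
  let ?J = "{of_int (snd c)<..<of_int (snd c) + 1 :: real}"
  have cell: "open_cell c \<noteq> {}" "open_cell c \<subseteq> ?I \<times> (UNIV :: real set)" "open_cell c \<subseteq> (UNIV :: real set) \<times> ?J"
    by (auto simp: open_cell_def)
  have "fst c \<in> fst ` T"
  proof (rule ccontr)
    assume "fst c \<notin> fst ` T"
    have "(x, y) \<notin> region T" if x: "x \<in> ?I" for x y
    proof
      assume "(x, y) \<in> region T"
      then obtain j where "(fst c, j) \<in> T"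
        using x mem_region_column[of "fst c" x y T] by auto
      with \<open>fst c \<notin> fst ` T\<close> show False
        by (metis fst_conv image_eqI)
    qed
    then have "(?I \<times> (UNIV :: real set)) \<inter> region T = {}"
      by auto
    moreover have "connected (?I \<times> (UNIV :: real set))" "\<not> bounded (?I \<times> (UNIV :: real set))"
      using bounded_Times_imp_bounded_snd[of ?I "UNIV :: real set"] by (auto simp: connected_Times)
    ultimately have "(?I \<times> (UNIV :: real set)) \<inter> H = {}"
      using hole_disjoint_unbounded_connected assms(1) by blast
    with cell(1,2) assms(2) show False
      by blast
  qed
  moreover have "snd c \<in> snd ` T"
  proof (rule ccontr)
    assume "snd c \<notin> snd ` T"
    have "(x, y) \<notin> region T" if y: "y \<in> ?J" for x y
    proof
      assume "(x, y) \<in> region T"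
      then obtain i where "(i, snd c) \<in> T"
        using y mem_region_row[of "snd c" y x T] by auto
      with \<open>snd c \<notin> snd ` T\<close> show False
        by (metis snd_conv image_eqI)
    qed
    then have "((UNIV :: real set) \<times> ?J) \<inter> region T = {}"
      by auto
    moreover have "connected ((UNIV :: real set) \<times> ?J)" "\<not> bounded ((UNIV :: real set) \<times> ?J)"
      using bounded_Times_imp_bounded_fst[of "UNIV :: real set" ?J] by (auto simp: connected_Times)
    ultimately have "((UNIV :: real set) \<times> ?J) \<inter> H = {}"
      using hole_disjoint_unbounded_connected assms(1) by blast
    with cell(1,3) assms(2) show False
      by blast
  qed
  ultimately show ?thesis
    by (simp add: mem_Times_iff)
qed

lemma card_add_card_holes_le_bounding_box:
  assumes "finite T"
  shows "card T + card (holes T) \<le> card (fst ` T) * card (snd ` T)"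
proof -
  let ?B = "fst ` T \<times> snd ` T"
  define cell where "cell H = (SOME c. c \<notin> T \<and> open_cell c \<subseteq> H)" for H
  have cell: "cell H \<notin> T" "open_cell (cell H) \<subseteq> H" if H: "H \<in> holes T" for H
  proof -
    obtain c where "c \<notin> T \<and> open_cell c \<subseteq> H"
      using hole_contains_open_cell[OF assms H] by blast
    then show "cell H \<notin> T" "open_cell (cell H) \<subseteq> H"
      unfolding cell_def by (metis (mono_tags, lifting) someI)+
  qed
  have "inj_on cell (holes T)"
  proof (rule inj_onI)
    fix H H' assume H: "H \<in> holes T" "H' \<in> holes T" and "cell H = cell H'"
    then have "open_cell (cell H) \<subseteq> H \<inter> H'"
      using cell(2)[OF H(1)] cell(2)[OF H(2)] by simp
    moreover have "open_cell (cell H) \<noteq> {}"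
      by (simp add: open_cell_def)
    ultimately show "H = H'"
      using H components_nonoverlap[of H "- region T" H'] by (auto simp: holes_def)
  qed
  moreover have "cell ` holes T \<subseteq> ?B - T"
  proof (rule image_subsetI)
    fix H assume "H \<in> holes T"
    then show "cell H \<in> ?B - T"
      using cell open_cell_in_hole_imp_mem_bounding_box by blast
  qed
  ultimately have "card (holes T) \<le> card (?B - T)"
    using assms by (intro card_inj_on_le) auto
  also have "\<dots> = card ?B - card T"
    using assms by (intro card_Diff_subset) force+
  finally show ?thesis
    using card_mono[of ?B T] assms by (force simp: card_cartesian_product)
qed

lemma ceiling_two_sqrt_le:
  fixes a b n :: nat
  assumes "n \<le> a * b"
  shows "\<lceil>2 * sqrt (real n)\<rceil> \<le> int a + int b"
proof -
  have "sqrt (real n) \<le> sqrt (real a * real b)"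
    using assms by (simp flip: of_nat_mult)
  also have "\<dots> \<le> (real a + real b) / 2"
    by (rule arith_geo_mean_sqrt) simp_all
  finally show ?thesis
    by (simp add: ceiling_le_iff)
qed

theorem lemma1:
  fixes T :: "(int \<times> int) set"
  assumes "polyomino T"
  shows "int (p_o T) \<ge> 2 * \<lceil>2 * sqrt (real (card T + card (holes T)))\<rceil>"
proof -
  have "finite T"
    using assms by (simp add: polyomino_def)
  then have "\<lceil>2 * sqrt (real (card T + card (holes T)))\<rceil> \<le> int (card (fst ` T)) + int (card (snd ` T))"
    by (intro ceiling_two_sqrt_le card_add_card_holes_le_bounding_box)
  moreover have "2 * int (card (fst ` T)) + 2 * int (card (snd ` T)) \<le> int (p_o T)"
    using columns_rows_le_p_o[OF \<open>finite T\<close>] by linarith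
  ultimately show ?thesis
    by linarith
qed

end
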